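(* Let $N\ge 2$ and let $A=(a_{ij})_{N\times N}\in\mathbb{C}_{N\times N}$ be a lower triangular constant matrix. Let $\phi(x,t)=(\phi_1,\dots,\phi_N)^T$ be a vector of $C^\infty$ functions satisfying $$\phi_{xx}=-A\phi,\qquad \phi_t=-4\phi_{xxx}.$$ Let $\sigma_N=(0,\dots,0,1)^T\in\mathbb{C}^N$ be the $N$-th standard unit vector, and define the determinants $$g=|\phi,\ \partial_x\phi,\ \dots,\ \partial_x^{N-2}\phi,\ \sigma_N|,\qquad f=|\phi,\ \partial_x\phi,\ \dots,\ \partial_x^{N-1}\phi|.$$ Then, with $\lambda=-a_{NN}$, the pair $f,g$ satisfies the bilinear Bäcklund transformation $$D_x^2\,f\cdot g=\lambda fg,\qquad (D_x^3+D_t+3\lambda D_x)\,f\cdot g=0.$$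
   Context: Hirota's bilinear operator is defined by $D_x^mD_t^n\,f(x,t)\cdot g(x,t)=(\partial_x-\partial_{x'})^m(\partial_t-\partial_{t'})^n f(x,t)g(x',t')\big|_{x'=x,\,t'=t}$; e.g. $D_x^2 f\cdot g=f_{xx}g-2f_xg_x+fg_{xx}$. A determinant $|v_1,\dots,v_N|$ denotes the determinant of the $N\times N$ matrix with columns $v_1,\dots,v_N$. *)

theory Defs
  imports "HOL-Analysis.Derivative" "Jordan_Normal_Form.Determinant"
begin

definition pdx :: "(real \<Rightarrow> real \<Rightarrow> complex) \<Rightarrow> real \<Rightarrow> real \<Rightarrow> complex" where
  "pdx F = (\<lambda>x t. vector_derivative (\<lambda>y. F y t) (at x))"

definition pdt :: "(real \<Rightarrow> real \<Rightarrow> complex) \<Rightarrow> real \<Rightarrow> real \<Rightarrow> complex" where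
  "pdt F = (\<lambda>x t. vector_derivative (\<lambda>s. F x s) (at t))"

definition pd_word :: "bool list \<Rightarrow> (real \<Rightarrow> real \<Rightarrow> complex) \<Rightarrow> real \<Rightarrow> real \<Rightarrow> complex" where
  "pd_word ws F = foldr (\<lambda>b G. if b then pdx G else pdt G) ws F"

text \<open>C^\<infinity> on R^2: every iterated partial derivative is (Frechet) differentiable
  everywhere as a function of (x,t).\<close>
definition smooth2 :: "(real \<Rightarrow> real \<Rightarrow> complex) \<Rightarrow> bool" where
  "smooth2 F \<longleftrightarrow> (\<forall>ws x t. (\<lambda>p. pd_word ws F (fst p) (snd p)) differentiable (at (x, t)))"

text \<open>Hirota bilinear operator D_x^m D_t^n f . g, expanded by the binomial theorem.\<close>
definition hirota :: "nat \<Rightarrow> nat \<Rightarrow> (real \<Rightarrow> real \<Rightarrow> complex) \<Rightarrow> (real \<Rightarrow> real \<Rightarrow> complex)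
    \<Rightarrow> real \<Rightarrow> real \<Rightarrow> complex" where
  "hirota m n f g x t =
     (\<Sum>k\<le>m. \<Sum>l\<le>n. of_nat (m choose k) * of_nat (n choose l) * (-1) ^ (k + l)
        * (pdx ^^ (m - k)) ((pdt ^^ (n - l)) f) x t * (pdx ^^ k) ((pdt ^^ l) g) x t)"

definition wron_f :: "nat \<Rightarrow> (nat \<Rightarrow> real \<Rightarrow> real \<Rightarrow> complex) \<Rightarrow> real \<Rightarrow> real \<Rightarrow> complex" where
  "wron_f N \<phi> x t = det (mat N N (\<lambda>(i, k). (pdx ^^ k) (\<phi> i) x t))"

definition wron_g :: "nat \<Rightarrow> (nat \<Rightarrow> real \<Rightarrow> real \<Rightarrow> complex) \<Rightarrow> real \<Rightarrow> real \<Rightarrow> complex" where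
  "wron_g N \<phi> x t = det (mat N N (\<lambda>(i, k).
      if k = N - 1 then (if i = N - 1 then 1 else 0) else (pdx ^^ k) (\<phi> i) x t))"

end

(*
  Both f and g are Wronskian-type determinants in the columns phi, phi_x, phi_xx, ..., and every
  x- or t-derivative of such a determinant is again a sum of determinants of the same kind with
  shifted columns.  Two families of identities between these determinants finish the proof.
  Since phi_xx = -A phi and, A being lower triangular, A sigma_N = a_NN sigma_N, the identity
  sum_j |v_1, ..., A v_j, ..., v_N| = tr(A) |v_1, ..., v_N| becomes a linear relation between
  determinants whose columns are shifted by two (trace identities).  The three-term Pluecker
  relations between determinants sharing all but two columns give quadratic relations.  After the
  derivatives of f and g are expanded, both bilinear equations are linear combinations of these.
*)

theory Submission
  imports Defs "HOL-Analysis.Henstock_Kurzweil_Integration"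
begin

section \<open>Determinants as functions of their columns\<close>

abbreviation cols_mat :: "nat \<Rightarrow> (nat \<Rightarrow> nat \<Rightarrow> 'a) \<Rightarrow> 'a mat" where
  "cols_mat n v \<equiv> mat n n (\<lambda>(i, k). v k i)"

definition det_cols :: "nat \<Rightarrow> (nat \<Rightarrow> nat \<Rightarrow> 'a::comm_ring_1) \<Rightarrow> 'a" where
  "det_cols n v = det (cols_mat n v)"

lemma det_cols_cong:
  assumes "\<And>k i. k < n \<Longrightarrow> i < n \<Longrightarrow> v k i = w k i"
  shows "det_cols n v = det_cols n w"
  unfolding det_cols_def using assms by (intro arg_cong[where f = det] eq_matI) auto

lemma det_cols_fun_upd:
  assumes j: "j < n"
  shows "det_cols n (v(j := w)) = (\<Sum>i<n. w i * cofactor (cols_mat n v) i j)"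
proof -
  let ?B = "cols_mat n (v(j := w))"
  have "det_cols n (v(j := w)) = (\<Sum>i<n. ?B $$ (i, j) * cofactor ?B i j)"
    unfolding det_cols_def by (rule laplace_expansion_column[OF _ j]) simp
  also have "\<dots> = (\<Sum>i<n. w i * cofactor ?B i j)"
    using j by (intro sum.cong) auto
  also have "\<dots> = (\<Sum>i<n. w i * cofactor (cols_mat n v) i j)"
  proof (intro sum.cong refl arg_cong[where f = "(*) _"])
    fix i
    have "mat_delete (cols_mat n (v(j := w))) i j = mat_delete (cols_mat n v) i j"
      unfolding mat_delete_def by (rule eq_matI) auto
    then show "cofactor (cols_mat n (v(j := w))) i j = cofactor (cols_mat n v) i j"
      unfolding cofactor_def by simp
  qed
  finally show ?thesis .
qed

lemma det_cols_scale_col: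
  "j < n \<Longrightarrow> det_cols n (v(j := (\<lambda>i. a * w i))) = a * det_cols n (v(j := w))"
  by (simp add: det_cols_fun_upd sum_distrib_left mult.assoc)

lemma det_cols_zero_col:
  assumes "j < n" and "\<And>i. i < n \<Longrightarrow> v j i = 0"
  shows "det_cols n v = 0"
  using det_cols_fun_upd[of j n v "v j"] assms by simp

lemma det_cols_equal_cols:
  assumes "j < n" "k < n" "j \<noteq> k" and "\<And>i. i < n \<Longrightarrow> v j i = v k i"
  shows "det_cols n v = 0"
  unfolding det_cols_def using assms
  by (intro det_identical_columns[of _ n j k]) (auto intro!: eq_vecI)

lemma det_cols_swap:
  assumes "j < n" "k < n" "j \<noteq> k"
  shows "det_cols n (v(j := v k, k := v j)) = - det_cols n v"
proof -
  have "cols_mat n (v(j := v k, k := v j)) = swapcols j k (cols_mat n v)"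
    using assms by (intro eq_matI) auto
  then show ?thesis
    unfolding det_cols_def using det_swapcols[OF assms, of "cols_mat n v"] by simp
qed

lemma det_cols_cofactor_sum:
  assumes "i < n" "l < n"
  shows "(\<Sum>k<n. v k i * cofactor (cols_mat n v) l k) = (if i = l then det_cols n v else 0)"
proof -
  have "(cols_mat n v * adj_mat (cols_mat n v)) $$ (i, l) = (\<Sum>k<n. v k i * cofactor (cols_mat n v) l k)"
    using assms unfolding times_mat_def scalar_prod_def adj_mat_def
    by (auto intro!: sum.cong simp: atLeast0LessThan)
  then show ?thesis
    using adj_mat(2)[of "cols_mat n v" n] assms unfolding det_cols_def by auto
qed

lemma det_cols_cramer:
  assumes "i < n"
  shows "det_cols n v * d i = (\<Sum>k<n. det_cols n (v(k := d)) * v k i)"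
proof -
  let ?c = "cofactor (cols_mat n v)"
  have "(\<Sum>k<n. det_cols n (v(k := d)) * v k i) = (\<Sum>k<n. \<Sum>l<n. d l * (v k i * ?c l k))"
    by (simp add: det_cols_fun_upd sum_distrib_right sum_distrib_left mult_ac)
  also have "\<dots> = (\<Sum>l<n. d l * (\<Sum>k<n. v k i * ?c l k))"
    by (subst sum.swap) (simp add: sum_distrib_left)
  also have "\<dots> = det_cols n v * d i"
    using assms by (simp add: det_cols_cofactor_sum if_distrib sum.delta' cong: if_cong)
  finally show ?thesis by simp
qed

lemma det_cols_trace:
  "(\<Sum>j<n. det_cols n (v(j := (\<lambda>i. \<Sum>l<n. B i l * v j l)))) = (\<Sum>i<n. B i i) * det_cols n v"
proof -
  let ?c = "cofactor (cols_mat n v)"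
  have "(\<Sum>j<n. det_cols n (v(j := (\<lambda>i. \<Sum>l<n. B i l * v j l))))
      = (\<Sum>j<n. \<Sum>i<n. \<Sum>l<n. B i l * (v j l * ?c i j))"
    by (simp add: det_cols_fun_upd sum_distrib_right mult_ac)
  also have "\<dots> = (\<Sum>i<n. \<Sum>l<n. B i l * (\<Sum>j<n. v j l * ?c i j))"
    by (subst sum.swap, rule sum.cong[OF refl], subst sum.swap) (simp add: sum_distrib_left)
  also have "\<dots> = (\<Sum>i<n. B i i) * det_cols n v"
    by (simp add: det_cols_cofactor_sum if_distrib sum.delta' sum_distrib_right cong: if_cong)
  finally show ?thesis .
qed

lemma det_cols_cramer_functional:
  "det_cols n v * (\<Sum>i<n. d i * c i) = (\<Sum>k<n. det_cols n (v(k := d)) * (\<Sum>i<n. v k i * c i))"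
proof -
  have "det_cols n v * (\<Sum>i<n. d i * c i) = (\<Sum>i<n. (det_cols n v * d i) * c i)"
    by (simp add: sum_distrib_left mult.assoc)
  also have "\<dots> = (\<Sum>i<n. \<Sum>k<n. det_cols n (v(k := d)) * (v k i * c i))"
    using det_cols_cramer[of _ n v d] by (intro sum.cong refl) (simp add: sum_distrib_right mult.assoc)
  also have "\<dots> = (\<Sum>k<n. det_cols n (v(k := d)) * (\<Sum>i<n. v k i * c i))"
    by (subst sum.swap) (simp add: sum_distrib_left)
  finally show ?thesis .
qed

lemma det_cols_swap_last_two:
  assumes "n \<ge> 2"
  shows "det_cols n (v(n-2 := y, n-1 := x)) = - det_cols n (v(n-2 := x, n-1 := y))"
proof -
  let ?w = "v(n-2 := x, n-1 := y)"
  have "?w(n-2 := ?w (n-1), n-1 := ?w (n-2)) = v(n-2 := y, n-1 := x)"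
    using assms by (auto simp: fun_eq_iff)
  with det_cols_swap[of "n-2" n "n-1" ?w] assms show ?thesis by simp
qed

lemma det_cols_plucker:
  fixes v :: "nat \<Rightarrow> nat \<Rightarrow> 'a::comm_ring_1"
  assumes "n \<ge> 2"
  defines "P \<equiv> \<lambda>x y. det_cols n (v(n-2 := x, n-1 := y))"
  shows "P a b * P c d - P a c * P b d + P a d * P b c = 0"
proof -
  obtain m where n: "n = Suc (Suc m)" using assms by (metis add_2_eq_Suc le_Suc_ex)
  have P: "P x y = det_cols n (v(m := x, Suc m := y))" for x y
    unfolding P_def n by simp
  have P_swap: "P y x = - P x y" for x y
    unfolding P_def by (rule det_cols_swap_last_two[OF assms(1)])
  define w where "w = v(m := a, Suc m := b)"
  have w: "w m = a" "w (Suc m) = b"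
    "w(m := d) = v(m := d, Suc m := b)" "w(Suc m := d) = v(m := a, Suc m := d)"
    by (auto simp: w_def fun_eq_iff)
  define \<gamma> where "\<gamma> i = cofactor (cols_mat n (v(m := c))) i (Suc m)" for i
  have P_c: "P c y = (\<Sum>i<n. y i * \<gamma> i)" for y
    unfolding P \<gamma>_def by (rule det_cols_fun_upd) (simp add: n)
  (* Cramer's rule expands d in the columns of w; the functional P c kills all but the last two. *)
  have "P a b * P c d = (\<Sum>k<n. det_cols n (w(k := d)) * P c (w k))"
    unfolding P_c P[of a b] w_def[symmetric] by (rule det_cols_cramer_functional)
  also have "\<dots> = det_cols n (w(m := d)) * P c a + det_cols n (w(Suc m := d)) * P c b"
  proof -
    have "P c (w k) = 0" if "k < m" for k
      unfolding P using that by (intro det_cols_equal_cols[of k _ "Suc m"]) (auto simp: n w_def)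
    then show ?thesis by (simp add: n w(1,2))
  qed
  also have "\<dots> = P d b * P c a + P a d * P c b"
    unfolding w(3,4) P ..
  finally show ?thesis
    using P_swap[of d b] P_swap[of c a] P_swap[of c b] by (simp add: algebra_simps)
qed

lemma det_cols_leibniz:
  "det_cols n v = (\<Sum>p | p permutes {0..<n}. signof p * (\<Prod>j<n. v j (p j)))"
  unfolding det_cols_def det_col[of "cols_mat n v" n, OF mat_carrier]
  by (intro sum.cong refl arg_cong2[where f = "(*)"] prod.cong) (auto simp: permutes_in_image)

lemma has_vector_derivative_det_cols:
  fixes v v' :: "nat \<Rightarrow> real \<Rightarrow> nat \<Rightarrow> 'a::real_normed_field"
  assumes "\<And>k i. k < n \<Longrightarrow> i < n \<Longrightarrow> ((\<lambda>s. v k s i) has_vector_derivative v' k s i) (at s)"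
  shows "((\<lambda>s. det_cols n (\<lambda>k. v k s)) has_vector_derivative
           (\<Sum>j<n. det_cols n ((\<lambda>k. v k s)(j := v' j s)))) (at s)"
proof -
  let ?P = "{p. p permutes {0..<n}}"
  let ?rest = "\<lambda>p j. \<Prod>l\<in>{..<n} - {j}. v l s (p l)"
  have "((\<lambda>s. \<Sum>p\<in>?P. signof p * (\<Prod>j<n. v j s (p j))) has_derivative
      (\<lambda>h. \<Sum>p\<in>?P. signof p * (\<Sum>j<n. (h *\<^sub>R v' j s (p j)) * ?rest p j))) (at s)"
    using assms
    by (intro has_derivative_sum has_derivative_mult_right has_derivative_prod)
       (auto simp: has_vector_derivative_def permutes_in_image)
  moreover have "(\<Sum>p\<in>?P. signof p * (\<Sum>j<n. (h *\<^sub>R v' j s (p j)) * ?rest p j))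
      = h *\<^sub>R (\<Sum>j<n. det_cols n ((\<lambda>k. v k s)(j := v' j s)))" for h
  proof -
    have "det_cols n ((\<lambda>k. v k s)(j := v' j s)) = (\<Sum>p\<in>?P. signof p * (v' j s (p j) * ?rest p j))"
      if "j < n" for j
      unfolding det_cols_leibniz using that
      by (intro sum.cong refl arg_cong2[where f = "(*)"], subst prod.remove[of _ j])
         (auto intro!: prod.cong)
    then have "(\<Sum>j<n. det_cols n ((\<lambda>k. v k s)(j := v' j s)))
        = (\<Sum>p\<in>?P. \<Sum>j<n. signof p * (v' j s (p j) * ?rest p j))"
      by (subst sum.swap) simp
    then show ?thesis
      by (simp add: scaleR_conv_of_real sum_distrib_left mult_ac)
  qed
  ultimately show ?thesis
    unfolding has_vector_derivative_def det_cols_leibniz by simp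
qed

section \<open>Partial derivatives of smooth functions of (x, t)\<close>

lemma pd_word_simps [simp]:
  "pd_word [] F = F"
  "pd_word (True # ws) F = pdx (pd_word ws F)"
  "pd_word (False # ws) F = pdt (pd_word ws F)"
  unfolding pd_word_def by simp_all

lemma pd_word_append: "pd_word (ws @ vs) F = pd_word ws (pd_word vs F)"
  unfolding pd_word_def by simp

lemma smooth2_pd_word: "smooth2 F \<Longrightarrow> smooth2 (pd_word ws F)"
  unfolding smooth2_def by (metis pd_word_append)

lemma smooth2_pdx: "smooth2 F \<Longrightarrow> smooth2 (pdx F)"
  using smooth2_pd_word[of F "[True]"] by simp

lemma smooth2_pdt: "smooth2 F \<Longrightarrow> smooth2 (pdt F)"
  using smooth2_pd_word[of F "[False]"] by simp

lemma smooth2_funpow_pdx: "smooth2 F \<Longrightarrow> smooth2 ((pdx ^^ k) F)"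
  by (induction k) (auto intro: smooth2_pdx)

lemma smooth2_differentiable: "smooth2 F \<Longrightarrow> (\<lambda>p. F (fst p) (snd p)) differentiable (at p)"
  unfolding smooth2_def by (metis pd_word_simps(1) prod.collapse)

lemma smooth2_continuous_on: "smooth2 F \<Longrightarrow> continuous_on S (\<lambda>p. F (fst p) (snd p))"
  by (intro continuous_at_imp_continuous_on ballI differentiable_imp_continuous_within
      smooth2_differentiable)

lemma smooth2_continuous_on_x: "smooth2 F \<Longrightarrow> continuous_on S (\<lambda>y. F y s)"
  using continuous_on_compose[of S "\<lambda>y. (y, s)" "\<lambda>p. F (fst p) (snd p)"]
  by (simp add: o_def continuous_intros smooth2_continuous_on)

lemma smooth2_continuous_on_swap: "smooth2 F \<Longrightarrow> continuous_on S (\<lambda>(s, y). F y s)"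
  using continuous_on_compose[of S "\<lambda>(s, y). (y, s)" "\<lambda>p. F (fst p) (snd p)"]
  by (simp add: o_def case_prod_beta continuous_intros smooth2_continuous_on)

lemma smooth2_differentiable_x: "smooth2 F \<Longrightarrow> (\<lambda>y. F y t) differentiable (at x)"
  using differentiable_compose[of "\<lambda>p. F (fst p) (snd p)" "\<lambda>y. (y, t)" x]
  by (simp add: smooth2_differentiable)

lemma smooth2_differentiable_t: "smooth2 F \<Longrightarrow> (\<lambda>s. F x s) differentiable (at t)"
  using differentiable_compose[of "\<lambda>p. F (fst p) (snd p)" "\<lambda>s. (x, s)" t]
  by (simp add: smooth2_differentiable)

lemma pdx_has_vector_derivative:
  "(\<lambda>y. F y t) differentiable (at x) \<Longrightarrow> ((\<lambda>y. F y t) has_vector_derivative pdx F x t) (at x)"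
  unfolding pdx_def by (rule vector_derivative_works[THEN iffD1])

lemma pdt_has_vector_derivative:
  "(\<lambda>s. F x s) differentiable (at t) \<Longrightarrow> ((\<lambda>s. F x s) has_vector_derivative pdt F x t) (at t)"
  unfolding pdt_def by (rule vector_derivative_works[THEN iffD1])

lemma pdx_eqI: "((\<lambda>y. F y t) has_vector_derivative F') (at x) \<Longrightarrow> pdx F x t = F'"
  unfolding pdx_def by (rule vector_derivative_at)

lemma pdt_eqI: "((\<lambda>s. F x s) has_vector_derivative F') (at t) \<Longrightarrow> pdt F x t = F'"
  unfolding pdt_def by (rule vector_derivative_at)

lemma integral_has_vector_derivative_at:
  fixes g :: "real \<Rightarrow> 'a::banach"
  assumes "continuous_on UNIV g" "a < x"
  shows "((\<lambda>u. integral {a..u} g) has_vector_derivative g x) (at x)"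
proof -
  have "((\<lambda>u. integral {a..u} g) has_vector_derivative g x) (at x within {a..x+1})"
    using assms continuous_on_subset[OF assms(1)] by (intro integral_has_vector_derivative) auto
  then have "((\<lambda>u. integral {a..u} g) has_vector_derivative g x) (at x within {a<..<x+1})"
    by (rule has_vector_derivative_within_subset) auto
  then show ?thesis
    by (subst (asm) has_vector_derivative_within_open) (use assms in auto)
qed

lemma smooth2_integral_pdx:
  assumes "smooth2 F" "a \<le> x"
  shows "F x s = F a s + integral {a..x} (\<lambda>y. pdx F y s)"
proof -
  have "((\<lambda>y. pdx F y s) has_integral (F x s - F a s)) {a..x}"
    using assms
    by (intro fundamental_theorem_of_calculus)
       (auto intro: has_vector_derivative_at_within pdx_has_vector_derivative smooth2_differentiable_x)
  then show ?thesis by (simp add: integral_unique)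
qed

lemma smooth2_pdt_integral_pdx:
  assumes F: "smooth2 F" and ax: "a \<le> x"
  shows "pdt F x t = pdt F a t + integral {a..x} (\<lambda>y. pdt (pdx F) y t)"
proof (rule pdt_eqI)
  have G: "smooth2 (pdx F)" and H: "smooth2 (pdt (pdx F))"
    using F by (simp_all add: smooth2_pdx smooth2_pdt)
  have "((\<lambda>s. integral (cbox a x) (\<lambda>y. pdx F y s)) has_vector_derivative
      integral (cbox a x) (\<lambda>y. pdt (pdx F) y t)) (at t within UNIV)"
    by (rule leibniz_rule_vector_derivative[where fx = "\<lambda>s y. pdt (pdx F) y s"])
       (auto simp: smooth2_continuous_on_swap[OF H] intro!: integrable_continuous_interval
         smooth2_continuous_on_x[OF G] pdt_has_vector_derivative smooth2_differentiable_t[OF G])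
  then show "((\<lambda>s. F x s) has_vector_derivative
      pdt F a t + integral {a..x} (\<lambda>y. pdt (pdx F) y t)) (at t)"
    unfolding smooth2_integral_pdx[OF F ax]
    by (intro has_vector_derivative_add pdt_has_vector_derivative smooth2_differentiable_t[OF F]) simp
qed

lemma pdt_pdx_commute:
  assumes F: "smooth2 F"
  shows "pdt (pdx F) x t = pdx (pdt F) x t"
proof -
  define a where "a = x - 1"
  have H: "continuous_on UNIV (\<lambda>y. pdt (pdx F) y t)"
    by (intro smooth2_continuous_on_x smooth2_pdt smooth2_pdx F)
  have "((\<lambda>u. pdt F a t + integral {a..u} (\<lambda>y. pdt (pdx F) y t))
      has_vector_derivative pdt (pdx F) x t) (at x)"
    using has_vector_derivative_add[OF has_vector_derivative_const integral_has_vector_derivative_at[OF H]]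
    by (simp add: a_def)
  then have "((\<lambda>u. pdt F u t) has_vector_derivative pdt (pdx F) x t) (at x)"
    by (rule has_vector_derivative_transform_within_open[where S = "{a<..}"])
       (auto simp: a_def intro!: smooth2_pdt_integral_pdx[OF F, symmetric])
  then show ?thesis
    by (rule pdx_eqI[symmetric])
qed

lemma pdx_zero: "pdx (\<lambda>x t. 0) x t = 0"
  by (rule pdx_eqI) simp

lemma pdx_add:
  assumes "(\<lambda>y. F y t) differentiable (at x)" "(\<lambda>y. G y t) differentiable (at x)"
  shows "pdx (\<lambda>x t. F x t + G x t) x t = pdx F x t + pdx G x t"
  using assms by (intro pdx_eqI has_vector_derivative_add pdx_has_vector_derivative)

lemma pdx_diff:
  assumes "(\<lambda>y. F y t) differentiable (at x)" "(\<lambda>y. G y t) differentiable (at x)"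
  shows "pdx (\<lambda>x t. F x t - G x t) x t = pdx F x t - pdx G x t"
  using assms by (intro pdx_eqI has_vector_derivative_diff pdx_has_vector_derivative)

lemma pdx_cmult:
  "(\<lambda>y. F y t) differentiable (at x) \<Longrightarrow> pdx (\<lambda>x t. c * F x t) x t = c * pdx F x t"
  by (intro pdx_eqI has_vector_derivative_mult_right pdx_has_vector_derivative)

lemma pdx_mult:
  assumes "(\<lambda>y. F y t) differentiable (at x)" "(\<lambda>y. G y t) differentiable (at x)"
  shows "pdx (\<lambda>x t. F x t * G x t) x t = F x t * pdx G x t + pdx F x t * G x t"
  using assms by (intro pdx_eqI has_vector_derivative_mult pdx_has_vector_derivative)

lemma pdx_lincomb:
  assumes "finite S" "\<And>j. j \<in> S \<Longrightarrow> (\<lambda>y. F j y t) differentiable (at x)"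
  shows "pdx (\<lambda>x t. \<Sum>j\<in>S. c j * F j x t) x t = (\<Sum>j\<in>S. c j * pdx (F j) x t)"
  using assms
  by (intro pdx_eqI has_vector_derivative_sum has_vector_derivative_mult_right pdx_has_vector_derivative)

lemma hirota_1_0: "hirota 1 0 f g x t = pdx f x t * g x t - f x t * pdx g x t"
  by (simp add: hirota_def)

lemma hirota_0_1: "hirota 0 1 f g x t = pdt f x t * g x t - f x t * pdt g x t"
  by (simp add: hirota_def)

lemma hirota_2_0:
  "hirota 2 0 f g x t = pdx (pdx f) x t * g x t - 2 * pdx f x t * pdx g x t + f x t * pdx (pdx g) x t"
  by (simp add: hirota_def eval_nat_numeral)

lemma hirota_3_0:
  "hirota 3 0 f g x t = pdx (pdx (pdx f)) x t * g x t - 3 * pdx (pdx f) x t * pdx g x t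
     + 3 * pdx f x t * pdx (pdx g) x t - f x t * pdx (pdx (pdx g)) x t"
  by (simp add: hirota_def eval_nat_numeral)

section \<open>Wronskian-type determinants\<close>

text \<open>Columns are named symbolically: \<open>Phi k\<close> is the k-th x-derivative of \<open>\<phi>\<close>, \<open>Sigma_N\<close> the
  last unit vector, \<open>Null\<close> the zero column.  \<open>wdet_hat N \<phi> m cs\<close> is the determinant with columns
  \<open>Phi 0, ..., Phi (m - 1)\<close> followed by \<open>cs\<close>, Freeman and Nimmo's \<open>|hat(m - 1), cs|\<close>.  A list of
  the wrong length yields 0; together with truncated subtraction this makes formulas such as
  \<open>wdet_hat N \<phi> (q - 2) [Phi (q - 1), ...]\<close> valid also for small q.\<close>

datatype col = Phi nat | Sigma_N | Null

fun col_dx :: "col \<Rightarrow> col" where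
  "col_dx (Phi k) = Phi (k + 1)" | "col_dx Sigma_N = Null" | "col_dx Null = Null"

fun col_dt :: "col \<Rightarrow> col" where
  "col_dt (Phi k) = Phi (k + 3)" | "col_dt Sigma_N = Null" | "col_dt Null = Null"

definition col_vec :: "nat \<Rightarrow> (nat \<Rightarrow> real \<Rightarrow> real \<Rightarrow> complex) \<Rightarrow> col \<Rightarrow> real \<Rightarrow> real \<Rightarrow> nat \<Rightarrow> complex" where
  "col_vec N \<phi> c x t = (case c of
      Phi k \<Rightarrow> (\<lambda>i. (pdx ^^ k) (\<phi> i) x t)
    | Sigma_N \<Rightarrow> (\<lambda>i. if i = N - 1 then 1 else 0)
    | Null \<Rightarrow> (\<lambda>i. 0))"

definition wdet :: "nat \<Rightarrow> (nat \<Rightarrow> real \<Rightarrow> real \<Rightarrow> complex) \<Rightarrow> col list \<Rightarrow> real \<Rightarrow> real \<Rightarrow> complex" where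
  "wdet N \<phi> cs x t = (if length cs = N then det_cols N (\<lambda>k. col_vec N \<phi> (cs ! k) x t) else 0)"

definition wdet_hat ::
    "nat \<Rightarrow> (nat \<Rightarrow> real \<Rightarrow> real \<Rightarrow> complex) \<Rightarrow> nat \<Rightarrow> col list \<Rightarrow> real \<Rightarrow> real \<Rightarrow> complex" where
  "wdet_hat N \<phi> m cs = wdet N \<phi> (map Phi [0..<m] @ cs)"

lemma wdet_length_neq: "length cs \<noteq> N \<Longrightarrow> wdet N \<phi> cs x t = 0"
  unfolding wdet_def by simp

lemma wdet_hat_length_neq: "m + length cs \<noteq> N \<Longrightarrow> wdet_hat N \<phi> m cs x t = 0"
  unfolding wdet_hat_def by (simp add: wdet_length_neq)

lemma wdet_hat_Suc: "wdet_hat N \<phi> (Suc m) cs = wdet_hat N \<phi> m (Phi m # cs)"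
  unfolding wdet_hat_def by simp

lemma wdet_not_distinct:
  assumes "\<not> distinct cs"
  shows "wdet N \<phi> cs x t = 0"
proof (cases "length cs = N")
  case True
  from assms obtain i j where "i < N" "j < N" "i \<noteq> j" "cs ! i = cs ! j"
    using True by (auto simp: distinct_conv_nth)
  then show ?thesis
    unfolding wdet_def by (auto intro: det_cols_equal_cols)
qed (simp add: wdet_length_neq)

lemma wdet_Null:
  assumes "Null \<in> set cs"
  shows "wdet N \<phi> cs x t = 0"
proof (cases "length cs = N")
  case True
  from assms obtain j where "j < N" "cs ! j = Null"
    using True by (auto simp: in_set_conv_nth)
  then show ?thesis
    unfolding wdet_def by (auto intro: det_cols_zero_col simp: col_vec_def)
qed (simp add: wdet_length_neq)

lemma wdet_hat_not_distinct: "\<not> distinct cs \<Longrightarrow> wdet_hat N \<phi> m cs x t = 0"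
  unfolding wdet_hat_def by (simp add: wdet_not_distinct)

lemma wdet_hat_Null: "Null \<in> set cs \<Longrightarrow> wdet_hat N \<phi> m cs x t = 0"
  unfolding wdet_hat_def by (simp add: wdet_Null)

lemma wdet_swap: "wdet N \<phi> (xs @ a # b # ys) x t = - wdet N \<phi> (xs @ b # a # ys) x t"
proof (cases "length xs + 2 + length ys = N")
  case True
  let ?v = "\<lambda>k. col_vec N \<phi> ((xs @ b # a # ys) ! k) x t"
  let ?j = "length xs"
  have "?v(?j := ?v (Suc ?j), Suc ?j := ?v ?j) = (\<lambda>k. col_vec N \<phi> ((xs @ a # b # ys) ! k) x t)"
    by (auto simp: fun_eq_iff nth_append nth_Cons split: nat.splits)
  with det_cols_swap[of ?j N "Suc ?j" ?v] True show ?thesis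
    unfolding wdet_def by simp
qed (auto simp: wdet_length_neq)

lemma wdet_move_right:
  "wdet N \<phi> (xs @ c # ys @ zs) x t = (- 1) ^ length ys * wdet N \<phi> (xs @ ys @ c # zs) x t"
proof (induction ys arbitrary: xs)
  case (Cons y ys)
  have "wdet N \<phi> (xs @ c # y # ys @ zs) x t = - wdet N \<phi> ((xs @ [y]) @ c # ys @ zs) x t"
    using wdet_swap[of N \<phi> xs c y "ys @ zs"] by simp
  then show ?case
    using Cons.IH[of "xs @ [y]"] by simp
qed simp

lemma wdet_hat_update:
  assumes "j < m"
  shows "wdet N \<phi> ((map Phi [0..<m] @ cs)[j := c]) x t
    = (- 1) ^ (m - Suc j) * wdet N \<phi> (map Phi [0..<j] @ map Phi [Suc j..<m] @ c # cs) x t"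
proof -
  have "[0..<m] = [0..<j] @ [j..<m]"
    using upt_add_eq_append[of 0 j "m - j"] assms by simp
  also have "[j..<m] = j # [Suc j..<m]"
    using assms by (rule upt_conv_Cons)
  finally have "(map Phi [0..<m] @ cs)[j := c] = map Phi [0..<j] @ c # map Phi [Suc j..<m] @ cs"
    by (simp add: list_update_append)
  then show ?thesis
    using wdet_move_right[of N \<phi> "map Phi [0..<j]" c "map Phi [Suc j..<m]" cs] by simp
qed

lemma wdet_hat_update_dup:
  assumes "j + s < m" "0 < s"
  shows "wdet N \<phi> ((map Phi [0..<m] @ cs)[j := Phi (j + s)]) x t = 0"
proof (rule wdet_not_distinct)
  let ?cs = "(map Phi [0..<m] @ cs)[j := Phi (j + s)]"
  have "?cs ! j = Phi (j + s)" "?cs ! (j + s) = Phi (j + s)" "j + s < length ?cs"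
    using assms by (auto simp: nth_append)
  moreover have "j < length ?cs" "j \<noteq> j + s"
    using assms by auto
  ultimately show "\<not> distinct ?cs"
    by (metis nth_eq_iff_index_eq)
qed

lemma sum_lessThan_add_nat: "(\<Sum>j<m + l. f j) = (\<Sum>j<m. f j) + (\<Sum>p<l. f (m + p))"
  for l :: nat
  by (induction l) (simp_all add: add.assoc)

lemma wdet_hat_shift1_sum:
  assumes "m + length cs = N"
  shows "(\<Sum>j<m. wdet N \<phi> ((map Phi [0..<m] @ cs)[j := Phi (j + 1)]) x t)
    = wdet_hat N \<phi> (m - 1) (Phi m # cs) x t"
proof (cases m)
  case 0
  then show ?thesis using assms by (simp add: wdet_hat_length_neq)
next
  case (Suc m')
  have "(\<Sum>j<m'. wdet N \<phi> ((map Phi [0..<m] @ cs)[j := Phi (j + 1)]) x t) = 0"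
    using Suc by (intro sum.neutral ballI wdet_hat_update_dup) auto
  then show ?thesis
    using wdet_hat_update[of m' m N \<phi> cs "Phi m"] Suc by (simp add: wdet_hat_def)
qed

lemma wdet_hat_shift2_sum:
  assumes "m + length cs = N"
  shows "(\<Sum>j<m. wdet N \<phi> ((map Phi [0..<m] @ cs)[j := Phi (j + 2)]) x t)
    = wdet_hat N \<phi> (m - 1) (Phi (m + 1) # cs) x t - wdet_hat N \<phi> (m - 2) (Phi (m - 1) # Phi m # cs) x t"
proof -
  consider "m = 0" | "m = 1" | m' where "m = m' + 2"
    by atomize_elim presburger
  then show ?thesis
  proof cases
    case 3
    have "(\<Sum>j<m'. wdet N \<phi> ((map Phi [0..<m] @ cs)[j := Phi (j + 2)]) x t) = 0"
      using 3 by (intro sum.neutral ballI wdet_hat_update_dup) auto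
    then show ?thesis
      using wdet_hat_update[of m' m N \<phi> cs "Phi (m' + 2)"]
        wdet_hat_update[of "m' + 1" m N \<phi> cs "Phi (m' + 3)"] 3
      by (simp add: wdet_hat_def eval_nat_numeral)
  qed (use assms in \<open>simp_all add: wdet_hat_def wdet_length_neq wdet_not_distinct\<close>)
qed

lemma wdet_hat_shift3_sum:
  assumes "m + length cs = N"
  shows "(\<Sum>j<m. wdet N \<phi> ((map Phi [0..<m] @ cs)[j := Phi (j + 3)]) x t)
    = wdet_hat N \<phi> (m - 3) (Phi (m - 2) # Phi (m - 1) # Phi m # cs) x t
      - wdet_hat N \<phi> (m - 2) (Phi (m - 1) # Phi (m + 1) # cs) x t
      + wdet_hat N \<phi> (m - 1) (Phi (m + 2) # cs) x t"
proof -
  consider "m = 0" | "m = 1" | "m = 2" | m' where "m = m' + 3"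
    by atomize_elim presburger
  then show ?thesis
  proof cases
    case 4
    have "(\<Sum>j<m'. wdet N \<phi> ((map Phi [0..<m] @ cs)[j := Phi (j + 3)]) x t) = 0"
      using 4 by (intro sum.neutral ballI wdet_hat_update_dup) auto
    then show ?thesis
      using wdet_hat_update[of m' m N \<phi> cs "Phi (m' + 3)"]
        wdet_hat_update[of "m' + 1" m N \<phi> cs "Phi (m' + 4)"]
        wdet_hat_update[of "m' + 2" m N \<phi> cs "Phi (m' + 5)"] 4
      by (simp add: wdet_hat_def eval_nat_numeral)
  next
    case 3
    then show ?thesis
      using wdet_hat_update[of 0 m N \<phi> cs "Phi 3"] wdet_hat_update[of 1 m N \<phi> cs "Phi 4"] assms
      by (simp add: wdet_hat_def wdet_length_neq eval_nat_numeral)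
  qed (use assms in \<open>simp_all add: wdet_hat_def wdet_length_neq wdet_not_distinct eval_nat_numeral\<close>)
qed

lemma det_cols_update_col_vec:
  assumes "length cs = N" "j < N"
  shows "det_cols N ((\<lambda>k. col_vec N \<phi> (cs ! k) x t)(j := (\<lambda>i. a * col_vec N \<phi> c x t i)))
    = a * wdet N \<phi> (cs[j := c]) x t"
  using assms unfolding det_cols_scale_col[OF assms(2)] wdet_def
  by (auto intro!: arg_cong[where f = "(*) a"] det_cols_cong simp: nth_list_update)

text \<open>Stated along a curve (X s, T s) so as to cover both partial derivatives.\<close>
lemma has_vector_derivative_wdet:
  fixes X T :: "real \<Rightarrow> real"
  assumes "\<And>c i. i < N \<Longrightarrow>
    ((\<lambda>s. col_vec N \<phi> c (X s) (T s) i) has_vector_derivative \<mu> * col_vec N \<phi> (\<delta> c) (X s) (T s) i) (at s)"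
  shows "((\<lambda>s. wdet N \<phi> cs (X s) (T s)) has_vector_derivative
    \<mu> * (\<Sum>j<N. wdet N \<phi> (cs[j := \<delta> (cs ! j)]) (X s) (T s))) (at s)"
proof (cases "length cs = N")
  case True
  have "((\<lambda>s. det_cols N (\<lambda>k. col_vec N \<phi> (cs ! k) (X s) (T s))) has_vector_derivative
      (\<Sum>j<N. det_cols N ((\<lambda>k. col_vec N \<phi> (cs ! k) (X s) (T s))
        (j := (\<lambda>i. \<mu> * col_vec N \<phi> (\<delta> (cs ! j)) (X s) (T s) i))))) (at s)"
    using assms by (intro has_vector_derivative_det_cols)
  then show ?thesis
    using True by (simp add: wdet_def det_cols_update_col_vec sum_distrib_left)
qed (simp add: wdet_length_neq)

lemma wdet_hat_plucker:
  "wdet_hat N \<phi> m [a, b] x t * wdet_hat N \<phi> m [c, d] x t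
   - wdet_hat N \<phi> m [a, c] x t * wdet_hat N \<phi> m [b, d] x t
   + wdet_hat N \<phi> m [a, d] x t * wdet_hat N \<phi> m [b, c] x t = 0"
proof (cases "m + 2 = N")
  case True
  let ?v = "\<lambda>k. col_vec N \<phi> (Phi k) x t"
  have "wdet_hat N \<phi> m [y, z] x t = det_cols N (?v(N-2 := col_vec N \<phi> y x t, N-1 := col_vec N \<phi> z x t))"
    for y z
    unfolding wdet_hat_def wdet_def using True
    by (auto intro!: det_cols_cong simp: nth_append nth_Cons split: nat.splits)
  then show ?thesis
    using det_cols_plucker[of N ?v] True by simp
qed (simp add: wdet_hat_length_neq)

section \<open>The bilinear equations\<close>

lemma bilinear_xx_algebra:
  fixes f g F1 G1 F2a F2b G2a G2b T a :: "'a::comm_ring_1"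
  assumes "T * f = F2a - F2b" "(T - a) * g = G2a - G2b" "f * G2b - F1 * G1 + g * F2a = 0"
  shows "(F2a + F2b) * g - 2 * F1 * G1 + f * (G2a + G2b) = - a * f * g"
proof -
  have "(F2a + F2b) * g - 2 * F1 * G1 + f * (G2a + G2b) + a * f * g
      = 2 * (f * G2b - F1 * G1 + g * F2a) + g * (T * f - (F2a - F2b)) - f * ((T - a) * g - (G2a - G2b))"
    by (simp add: algebra_simps)
  then show ?thesis
    using assms by (simp add: eq_neg_iff_add_eq_0)
qed

lemma bilinear_xxx_t_algebra:
  fixes f g F1 G1 F2a F2b G2a G2b F3a F3b F3c G3a G3b G3c T a :: "'a::comm_ring_1"
  assumes "T * f = F2a - F2b" "T * F1 = F3a - F3c" "(T - a) * g = G2a - G2b" "(T - a) * G1 = G3a - G3c"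
    and "f * G3c - F2b * G1 + g * F3b = 0"
    and "f * (G3b + G3c) - F2b * G1 - F1 * G2a + g * (F3a + F3b) = 0"
  shows "((F3a + 2 * F3b + F3c) * g - 3 * (F2a + F2b) * G1 + 3 * F1 * (G2a + G2b)
        - f * (G3a + 2 * G3b + G3c))
      + (- 4 * (F3a - F3b + F3c) * g - f * (- 4 * (G3a - G3b + G3c)))
      + 3 * (- a) * (F1 * g - f * G1) = 0"
proof -
  have "((F3a + 2 * F3b + F3c) * g - 3 * (F2a + F2b) * G1 + 3 * F1 * (G2a + G2b)
        - f * (G3a + 2 * G3b + G3c))
      + (- 4 * (F3a - F3b + F3c) * g - f * (- 4 * (G3a - G3b + G3c)))
      + 3 * (- a) * (F1 * g - f * G1)
    = 3 * (4 * (f * G3c - F2b * G1 + g * F3b)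
        - 2 * (f * (G3b + G3c) - F2b * G1 - F1 * G2a + g * (F3a + F3b))
        - g * (T * F1 - (F3a - F3c)) - f * ((T - a) * G1 - (G3a - G3c)) + G1 * (T * f - (F2a - F2b))
        + F1 * ((T - a) * g - (G2a - G2b)))"
    by (simp add: algebra_simps)
  then show ?thesis
    using assms by simp
qed

locale wronskian_system =
  fixes N :: nat and A :: "nat \<Rightarrow> nat \<Rightarrow> complex" and \<phi> :: "nat \<Rightarrow> real \<Rightarrow> real \<Rightarrow> complex"
  assumes N2: "N \<ge> 2"
    and lower: "\<And>i j. i < N \<Longrightarrow> j < N \<Longrightarrow> i < j \<Longrightarrow> A i j = 0"
    and smooth: "\<And>i. i < N \<Longrightarrow> smooth2 (\<phi> i)"
    and eq_x: "\<And>i x t. i < N \<Longrightarrow> pdx (pdx (\<phi> i)) x t = - (\<Sum>j<N. A i j * \<phi> j x t)"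
    and eq_t: "\<And>i x t. i < N \<Longrightarrow> pdt (\<phi> i) x t = - 4 * pdx (pdx (pdx (\<phi> i))) x t"
begin

lemma smooth2_phi: "i < N \<Longrightarrow> smooth2 ((pdx ^^ k) (\<phi> i))"
  by (rule smooth2_funpow_pdx[OF smooth])

lemma pdx_pdx_phi:
  "i < N \<Longrightarrow> pdx (pdx ((pdx ^^ k) (\<phi> i))) x t = - (\<Sum>j<N. A i j * (pdx ^^ k) (\<phi> j) x t)"
proof (induction k arbitrary: x t)
  case (Suc k)
  then have "pdx (pdx ((pdx ^^ k) (\<phi> i))) = (\<lambda>x t. \<Sum>j<N. (- A i j) * (pdx ^^ k) (\<phi> j) x t)"
    by (auto simp: fun_eq_iff sum_negf)
  then have "pdx (pdx ((pdx ^^ Suc k) (\<phi> i))) x t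
      = pdx (\<lambda>x t. \<Sum>j<N. (- A i j) * (pdx ^^ k) (\<phi> j) x t) x t"
    by simp
  also have "\<dots> = (\<Sum>j<N. (- A i j) * pdx ((pdx ^^ k) (\<phi> j)) x t)"
    by (rule pdx_lincomb) (auto intro: smooth2_differentiable_x smooth2_phi)
  finally show ?case by (simp add: sum_negf)
qed (simp add: eq_x)

lemma pdt_funpow_pdx_phi:
  "i < N \<Longrightarrow> pdt ((pdx ^^ k) (\<phi> i)) x t = - 4 * pdx (pdx (pdx ((pdx ^^ k) (\<phi> i)))) x t"
proof (induction k arbitrary: x t)
  case (Suc k)
  let ?F = "(pdx ^^ k) (\<phi> i)"
  have IH: "pdt ?F = (\<lambda>x t. - 4 * pdx (pdx (pdx ?F)) x t)"
    using Suc by (simp add: fun_eq_iff)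
  have "pdt ((pdx ^^ Suc k) (\<phi> i)) x t = pdx (pdt ?F) x t"
    using pdt_pdx_commute[OF smooth2_phi[OF Suc.prems]] by simp
  also have "\<dots> = pdx (\<lambda>x t. - 4 * pdx (pdx (pdx ?F)) x t) x t"
    unfolding IH ..
  also have "\<dots> = - 4 * pdx (pdx (pdx (pdx ?F))) x t"
    by (intro pdx_cmult smooth2_differentiable_x smooth2_pdx smooth2_phi Suc.prems)
  finally show ?case by simp
qed (simp add: eq_t)

lemma A_col_vec_Phi:
  "i < N \<Longrightarrow> (\<Sum>l<N. A i l * col_vec N \<phi> (Phi k) x t l) = - col_vec N \<phi> (Phi (k + 2)) x t i"
  by (simp add: col_vec_def pdx_pdx_phi)

text \<open>The only use of lower triangularity of A.\<close>
lemma A_col_vec_Sigma_N: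
  assumes "i < N"
  shows "(\<Sum>l<N. A i l * col_vec N \<phi> Sigma_N x t l) = A (N - 1) (N - 1) * col_vec N \<phi> Sigma_N x t i"
proof -
  have "(\<Sum>l<N. A i l * col_vec N \<phi> Sigma_N x t l) = A i (N - 1)"
    using N2 by (simp add: col_vec_def if_distrib sum.delta' cong: if_cong)
  also have "\<dots> = (if i = N - 1 then A (N - 1) (N - 1) else 0)"
    using lower[of i "N - 1"] assms by auto
  finally show ?thesis
    by (simp add: col_vec_def)
qed

lemma has_vector_derivative_col_vec_x:
  "i < N \<Longrightarrow> ((\<lambda>y. col_vec N \<phi> c y t i) has_vector_derivative col_vec N \<phi> (col_dx c) x t i) (at x)"
  by (cases c)
     (auto simp: col_vec_def intro: pdx_has_vector_derivative smooth2_differentiable_x smooth2_phi)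

lemma has_vector_derivative_col_vec_t:
  "i < N \<Longrightarrow> ((\<lambda>s. col_vec N \<phi> c x s i) has_vector_derivative - 4 * col_vec N \<phi> (col_dt c) x t i) (at t)"
proof (cases c)
  case (Phi k)
  assume "i < N"
  then have "((\<lambda>s. (pdx ^^ k) (\<phi> i) x s) has_vector_derivative pdt ((pdx ^^ k) (\<phi> i)) x t) (at t)"
    by (intro pdt_has_vector_derivative smooth2_differentiable_t smooth2_phi)
  with \<open>i < N\<close> show ?thesis
    by (simp add: Phi col_vec_def pdt_funpow_pdx_phi eval_nat_numeral)
qed (simp_all add: col_vec_def)

lemma has_vector_derivative_wdet_x:
  "((\<lambda>y. wdet N \<phi> cs y t) has_vector_derivative (\<Sum>j<N. wdet N \<phi> (cs[j := col_dx (cs ! j)]) x t)) (at x)"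
  using has_vector_derivative_wdet[where X = "\<lambda>s. s" and T = "\<lambda>_. t" and \<mu> = 1 and \<delta> = col_dx]
  by (simp add: has_vector_derivative_col_vec_x)

lemma pdx_wdet: "pdx (wdet N \<phi> cs) x t = (\<Sum>j<N. wdet N \<phi> (cs[j := col_dx (cs ! j)]) x t)"
  by (rule pdx_eqI[OF has_vector_derivative_wdet_x])

lemma pdt_wdet: "pdt (wdet N \<phi> cs) x t = - 4 * (\<Sum>j<N. wdet N \<phi> (cs[j := col_dt (cs ! j)]) x t)"
  using has_vector_derivative_wdet[where X = "\<lambda>_. x" and T = "\<lambda>s. s" and \<mu> = "- 4" and \<delta> = col_dt,
      OF has_vector_derivative_col_vec_t]
  by (simp add: pdt_eqI)

lemma wdet_hat_differentiable_x: "(\<lambda>y. wdet_hat N \<phi> m cs y t) differentiable (at x)"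
  unfolding wdet_hat_def by (rule differentiableI_vector[OF has_vector_derivative_wdet_x])

lemma pdx_wdet_hat:
  assumes "N \<le> m + length cs"
  shows "pdx (wdet_hat N \<phi> m cs) x t = wdet_hat N \<phi> (m - 1) (Phi m # cs) x t
    + (\<Sum>p<length cs. wdet_hat N \<phi> m (cs[p := col_dx (cs ! p)]) x t)"
proof (cases "m + length cs = N")
  case True
  let ?L = "map Phi [0..<m] @ cs"
  have "pdx (wdet_hat N \<phi> m cs) x t = (\<Sum>j<m + length cs. wdet N \<phi> (?L[j := col_dx (?L ! j)]) x t)"
    unfolding wdet_hat_def pdx_wdet True ..
  also have "\<dots> = (\<Sum>j<m. wdet N \<phi> (?L[j := Phi (j + 1)]) x t)
      + (\<Sum>p<length cs. wdet_hat N \<phi> m (cs[p := col_dx (cs ! p)]) x t)"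
    by (simp add: sum_lessThan_add_nat nth_append list_update_append wdet_hat_def)
  finally show ?thesis
    using wdet_hat_shift1_sum[OF True] by simp
next
  case False
  then have "wdet_hat N \<phi> m cs = (\<lambda>x t. 0)"
    by (simp add: fun_eq_iff wdet_hat_length_neq)
  then show ?thesis
    using False assms by (simp add: pdx_zero wdet_hat_length_neq)
qed

lemma pdt_wdet_hat:
  assumes "m + length cs = N" "set cs \<subseteq> {Sigma_N}"
  shows "pdt (wdet_hat N \<phi> m cs) x t = - 4 *
    (wdet_hat N \<phi> (m - 3) (Phi (m - 2) # Phi (m - 1) # Phi m # cs) x t
      - wdet_hat N \<phi> (m - 2) (Phi (m - 1) # Phi (m + 1) # cs) x t + wdet_hat N \<phi> (m - 1) (Phi (m + 2) # cs) x t)"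
proof -
  let ?L = "map Phi [0..<m] @ cs"
  have "cs ! p = Sigma_N" if "p < length cs" for p
    using assms(2) that nth_mem by blast
  then have "wdet N \<phi> (?L[m + p := col_dt (?L ! (m + p))]) x t = 0" if "p < length cs" for p
    using that by (intro wdet_Null) (simp add: nth_append list_update_append set_update_memI)
  then have "(\<Sum>j<m + length cs. wdet N \<phi> (?L[j := col_dt (?L ! j)]) x t)
      = (\<Sum>j<m. wdet N \<phi> (?L[j := Phi (j + 3)]) x t)"
    by (simp add: sum_lessThan_add_nat nth_append)
  moreover have "pdt (wdet_hat N \<phi> m cs) x t
      = - 4 * (\<Sum>j<m + length cs. wdet N \<phi> (?L[j := col_dt (?L ! j)]) x t)"
    unfolding wdet_hat_def pdt_wdet assms(1) ..
  ultimately show ?thesis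
    using wdet_hat_shift3_sum[OF assms(1)] by simp
qed

lemma det_cols_A_col_Phi:
  fixes x t :: real
  assumes "length cs = N" "j < N" "cs ! j = Phi k"
  defines "v \<equiv> \<lambda>k. col_vec N \<phi> (cs ! k) x t"
  shows "det_cols N (v(j := (\<lambda>i. \<Sum>l<N. A i l * v j l))) = - wdet N \<phi> (cs[j := Phi (k + 2)]) x t"
proof -
  have "det_cols N (v(j := (\<lambda>i. \<Sum>l<N. A i l * v j l)))
      = det_cols N (v(j := (\<lambda>i. - 1 * col_vec N \<phi> (Phi (k + 2)) x t i)))"
    using assms by (intro det_cols_cong) (simp add: A_col_vec_Phi)
  then show ?thesis
    using det_cols_update_col_vec[OF assms(1,2), where a = "- 1" and c = "Phi (k + 2)"]
    by (simp add: v_def)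
qed

lemma det_cols_A_col_Sigma_N:
  fixes x t :: real
  assumes "length cs = N" "j < N" "cs ! j = Sigma_N"
  defines "v \<equiv> \<lambda>k. col_vec N \<phi> (cs ! k) x t"
  shows "det_cols N (v(j := (\<lambda>i. \<Sum>l<N. A i l * v j l))) = A (N - 1) (N - 1) * wdet N \<phi> cs x t"
proof -
  have "det_cols N (v(j := (\<lambda>i. \<Sum>l<N. A i l * v j l)))
      = det_cols N (v(j := (\<lambda>i. A (N - 1) (N - 1) * col_vec N \<phi> (cs ! j) x t i)))"
    using assms by (intro det_cols_cong) (simp add: A_col_vec_Sigma_N)
  moreover have "cs[j := Sigma_N] = cs"
    using assms(3) list_update_id by metis
  ultimately show ?thesis
    using det_cols_update_col_vec[OF assms(1,2)] assms(3) by (simp add: v_def)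
qed

lemma wdet_hat_trace:
  assumes "m + length cs = N" "set cs \<subseteq> {Sigma_N}"
  shows "((\<Sum>i<N. A i i) - of_nat (length cs) * A (N - 1) (N - 1)) * wdet_hat N \<phi> m cs x t
    = wdet_hat N \<phi> (m - 2) (Phi (m - 1) # Phi m # cs) x t - wdet_hat N \<phi> (m - 1) (Phi (m + 1) # cs) x t"
proof -
  let ?L = "map Phi [0..<m] @ cs"
  let ?v = "\<lambda>k. col_vec N \<phi> (?L ! k) x t"
  let ?Av = "\<lambda>j i. \<Sum>l<N. A i l * ?v j l"
  have len: "length ?L = N"
    using assms(1) by simp
  have "cs ! p = Sigma_N" if "p < length cs" for p
    using assms(2) that nth_mem by blast
  then have Sigma_N: "det_cols N (?v(m + p := ?Av (m + p))) = A (N - 1) (N - 1) * wdet_hat N \<phi> m cs x t"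
    if "p < length cs" for p
    using that assms(1) det_cols_A_col_Sigma_N[OF len, of "m + p"] by (simp add: nth_append wdet_hat_def)
  have Phi: "det_cols N (?v(j := ?Av j)) = - wdet N \<phi> (?L[j := Phi (j + 2)]) x t" if "j < m" for j
    using that assms(1) det_cols_A_col_Phi[OF len, of j j] by (simp add: nth_append)
  have "(\<Sum>i<N. A i i) * wdet_hat N \<phi> m cs x t = (\<Sum>j<m + length cs. det_cols N (?v(j := ?Av j)))"
    using det_cols_trace[of N ?v A] len assms(1) by (simp add: wdet_hat_def wdet_def)
  also have "\<dots> = - (\<Sum>j<m. wdet N \<phi> (?L[j := Phi (j + 2)]) x t)
      + of_nat (length cs) * A (N - 1) (N - 1) * wdet_hat N \<phi> m cs x t"
    by (simp add: sum_lessThan_add_nat Phi Sigma_N sum_negf)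
  also have "\<dots> = wdet_hat N \<phi> (m - 2) (Phi (m - 1) # Phi m # cs) x t
      - wdet_hat N \<phi> (m - 1) (Phi (m + 1) # cs) x t
      + of_nat (length cs) * A (N - 1) (N - 1) * wdet_hat N \<phi> m cs x t"
    unfolding wdet_hat_shift2_sum[OF assms(1)] by simp
  finally show ?thesis
    by (simp add: left_diff_distrib)
qed

context
  fixes q assumes N_eq: "N = q + 2"
begin

abbreviation W :: "nat \<Rightarrow> col list \<Rightarrow> real \<Rightarrow> real \<Rightarrow> complex" where
  "W \<equiv> wdet_hat N \<phi>"

lemma pdx_W:
  "q + 2 \<le> m + length cs \<Longrightarrow> pdx (W m cs) = (\<lambda>x t. W (m - 1) (Phi m # cs) x t
    + (\<Sum>p<length cs. W m (cs[p := col_dx (cs ! p)]) x t))"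
  by (intro ext pdx_wdet_hat) (simp add: N_eq)

lemma wron_f_eq: "wron_f N \<phi> = W q [Phi q, Phi (q + 1)]"
proof -
  have "wron_f N \<phi> x t = W N [] x t" for x t
    unfolding wron_f_def wdet_hat_def wdet_def det_cols_def
    by (simp, intro arg_cong[where f = det] eq_matI) (auto simp: col_vec_def)
  then show ?thesis
    by (simp add: fun_eq_iff N_eq wdet_hat_Suc)
qed

lemma wron_g_eq: "wron_g N \<phi> = W q [Phi q, Sigma_N]"
proof -
  have "wron_g N \<phi> x t = W (N - 1) [Sigma_N] x t" for x t
    unfolding wron_g_def wdet_hat_def wdet_def det_cols_def using N2
    by (simp, intro arg_cong[where f = det] eq_matI) (auto simp: col_vec_def nth_append)
  then show ?thesis
    by (simp add: fun_eq_iff N_eq wdet_hat_Suc)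
qed

lemma wron_f_x: "pdx (wron_f N \<phi>) = W q [Phi q, Phi (q + 2)]"
  by (simp add: wron_f_eq pdx_W wdet_hat_not_distinct)

lemma wron_f_xx:
  "pdx (pdx (wron_f N \<phi>)) = (\<lambda>x t. W q [Phi (q + 1), Phi (q + 2)] x t + W q [Phi q, Phi (q + 3)] x t)"
  by (simp add: wron_f_x pdx_W wdet_hat_not_distinct eval_nat_numeral)

lemma wron_f_xxx:
  "pdx (pdx (pdx (wron_f N \<phi>))) x t = W (q - 1) [Phi q, Phi (q + 1), Phi (q + 2)] x t
    + 2 * W q [Phi (q + 1), Phi (q + 3)] x t + W q [Phi q, Phi (q + 4)] x t"
  by (simp add: wron_f_xx pdx_add wdet_hat_differentiable_x pdx_W wdet_hat_not_distinct eval_nat_numeral)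

lemma wron_f_t:
  "pdt (wron_f N \<phi>) x t = - 4 * (W (q - 1) [Phi q, Phi (q + 1), Phi (q + 2)] x t
    - W q [Phi (q + 1), Phi (q + 3)] x t + W q [Phi q, Phi (q + 4)] x t)"
  unfolding wron_f_eq using pdt_wdet_hat[of "q + 2" "[]" x t]
  by (simp add: N_eq wdet_hat_Suc eval_nat_numeral)

lemma wron_g_x: "pdx (wron_g N \<phi>) = W q [Phi (q + 1), Sigma_N]"
  by (simp add: wron_g_eq pdx_W wdet_hat_not_distinct wdet_hat_Null)

lemma wron_g_xx:
  "pdx (pdx (wron_g N \<phi>))
    = (\<lambda>x t. W (q - 1) [Phi q, Phi (q + 1), Sigma_N] x t + W q [Phi (q + 2), Sigma_N] x t)"
  by (simp add: wron_g_x pdx_W wdet_hat_not_distinct wdet_hat_Null)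

lemma wron_g_xxx:
  "pdx (pdx (pdx (wron_g N \<phi>))) x t = W (q - 2) [Phi (q - 1), Phi q, Phi (q + 1), Sigma_N] x t
    + 2 * W (q - 1) [Phi q, Phi (q + 2), Sigma_N] x t + W q [Phi (q + 3), Sigma_N] x t"
  by (simp add: wron_g_xx pdx_add wdet_hat_differentiable_x pdx_W wdet_hat_not_distinct wdet_hat_Null
      eval_nat_numeral)

lemma wron_g_t:
  "pdt (wron_g N \<phi>) x t = - 4 * (W (q - 2) [Phi (q - 1), Phi q, Phi (q + 1), Sigma_N] x t
    - W (q - 1) [Phi q, Phi (q + 2), Sigma_N] x t + W q [Phi (q + 3), Sigma_N] x t)"
  unfolding wron_g_eq using pdt_wdet_hat[of "q + 1" "[Sigma_N]" x t]
  by (simp add: N_eq wdet_hat_Suc eval_nat_numeral)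

lemma trace_identity_f:
  "(\<Sum>i<N. A i i) * W q [Phi q, Phi (q + 1)] x t
    = W q [Phi (q + 1), Phi (q + 2)] x t - W q [Phi q, Phi (q + 3)] x t"
  using wdet_hat_trace[of "q + 2" "[]" x t] by (simp add: N_eq wdet_hat_Suc eval_nat_numeral)

lemma trace_identity_g:
  "((\<Sum>i<N. A i i) - A (N - 1) (N - 1)) * W q [Phi q, Sigma_N] x t
    = W (q - 1) [Phi q, Phi (q + 1), Sigma_N] x t - W q [Phi (q + 2), Sigma_N] x t"
  using wdet_hat_trace[of "q + 1" "[Sigma_N]" x t] by (simp add: N_eq wdet_hat_Suc)

lemma trace_identity_f_x:
  "(\<Sum>i<N. A i i) * W q [Phi q, Phi (q + 2)] x t
    = W (q - 1) [Phi q, Phi (q + 1), Phi (q + 2)] x t - W q [Phi q, Phi (q + 4)] x t"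
proof -
  have "(\<lambda>x t. (\<Sum>i<N. A i i) * W q [Phi q, Phi (q + 1)] x t)
      = (\<lambda>x t. W q [Phi (q + 1), Phi (q + 2)] x t - W q [Phi q, Phi (q + 3)] x t)"
    using trace_identity_f by simp
  from arg_cong[where f = "\<lambda>F. pdx F x t", OF this] show ?thesis
    by (simp add: pdx_cmult pdx_diff wdet_hat_differentiable_x pdx_W wdet_hat_not_distinct
        eval_nat_numeral)
qed

lemma trace_identity_g_x:
  "((\<Sum>i<N. A i i) - A (N - 1) (N - 1)) * W q [Phi (q + 1), Sigma_N] x t
    = W (q - 2) [Phi (q - 1), Phi q, Phi (q + 1), Sigma_N] x t - W q [Phi (q + 3), Sigma_N] x t"
proof -
  have "(\<lambda>x t. ((\<Sum>i<N. A i i) - A (N - 1) (N - 1)) * W q [Phi q, Sigma_N] x t)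
      = (\<lambda>x t. W (q - 1) [Phi q, Phi (q + 1), Sigma_N] x t - W q [Phi (q + 2), Sigma_N] x t)"
    using trace_identity_g by simp
  from arg_cong[where f = "\<lambda>F. pdx F x t", OF this] show ?thesis
    by (simp add: pdx_cmult pdx_diff wdet_hat_differentiable_x pdx_W wdet_hat_not_distinct wdet_hat_Null
        eval_nat_numeral)
qed

lemma plucker_identity_1:
  "W q [Phi q, Phi (q + 1)] x t * W q [Phi (q + 2), Sigma_N] x t
    - W q [Phi q, Phi (q + 2)] x t * W q [Phi (q + 1), Sigma_N] x t
    + W q [Phi q, Sigma_N] x t * W q [Phi (q + 1), Phi (q + 2)] x t = 0"
  by (rule wdet_hat_plucker)

lemma plucker_identity_2:
  "W q [Phi q, Phi (q + 1)] x t * W q [Phi (q + 3), Sigma_N] x t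
    - W q [Phi q, Phi (q + 3)] x t * W q [Phi (q + 1), Sigma_N] x t
    + W q [Phi q, Sigma_N] x t * W q [Phi (q + 1), Phi (q + 3)] x t = 0"
  by (rule wdet_hat_plucker)

lemma plucker_identity_1_x:
  "W q [Phi q, Phi (q + 1)] x t
      * (W (q - 1) [Phi q, Phi (q + 2), Sigma_N] x t + W q [Phi (q + 3), Sigma_N] x t)
    - W q [Phi q, Phi (q + 3)] x t * W q [Phi (q + 1), Sigma_N] x t
    - W q [Phi q, Phi (q + 2)] x t * W (q - 1) [Phi q, Phi (q + 1), Sigma_N] x t
    + W q [Phi q, Sigma_N] x t
      * (W (q - 1) [Phi q, Phi (q + 1), Phi (q + 2)] x t + W q [Phi (q + 1), Phi (q + 3)] x t) = 0"
proof -
  have "(\<lambda>x t. W q [Phi q, Phi (q + 1)] x t * W q [Phi (q + 2), Sigma_N] x t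
      - W q [Phi q, Phi (q + 2)] x t * W q [Phi (q + 1), Sigma_N] x t
      + W q [Phi q, Sigma_N] x t * W q [Phi (q + 1), Phi (q + 2)] x t) = (\<lambda>x t. 0)"
    using plucker_identity_1 by simp
  from arg_cong[where f = "\<lambda>F. pdx F x t", OF this] show ?thesis
    by (simp add: pdx_add pdx_diff pdx_mult pdx_zero wdet_hat_differentiable_x pdx_W
        wdet_hat_not_distinct wdet_hat_Null eval_nat_numeral algebra_simps)
qed

lemma bilinear_xx:
  "hirota 2 0 (wron_f N \<phi>) (wron_g N \<phi>) x t = - A (N - 1) (N - 1) * wron_f N \<phi> x t * wron_g N \<phi> x t"
  unfolding hirota_2_0
  unfolding wron_f_xx wron_g_xx
  unfolding wron_f_x wron_g_x
  unfolding wron_f_eq wron_g_eq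
  by (rule bilinear_xx_algebra[OF trace_identity_f trace_identity_g plucker_identity_1])

lemma bilinear_xxx_t:
  "hirota 3 0 (wron_f N \<phi>) (wron_g N \<phi>) x t + hirota 0 1 (wron_f N \<phi>) (wron_g N \<phi>) x t
    + 3 * (- A (N - 1) (N - 1)) * hirota 1 0 (wron_f N \<phi>) (wron_g N \<phi>) x t = 0"
  unfolding hirota_3_0 hirota_0_1 hirota_1_0
  unfolding wron_f_xxx wron_g_xxx wron_f_t wron_g_t
  unfolding wron_f_xx wron_g_xx
  unfolding wron_f_x wron_g_x
  unfolding wron_f_eq wron_g_eq
  by (rule bilinear_xxx_t_algebra[OF trace_identity_f trace_identity_f_x
        trace_identity_g trace_identity_g_x plucker_identity_2 plucker_identity_1_x])

end
end

theorem theorem3p2p1: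
  fixes N :: nat and A :: "nat \<Rightarrow> nat \<Rightarrow> complex"
    and \<phi> :: "nat \<Rightarrow> real \<Rightarrow> real \<Rightarrow> complex"
  assumes N2: "N \<ge> 2"
    and lower: "\<And>i j. i < N \<Longrightarrow> j < N \<Longrightarrow> i < j \<Longrightarrow> A i j = 0"
    and smooth: "\<And>i. i < N \<Longrightarrow> smooth2 (\<phi> i)"
    and eq_x: "\<And>i x t. i < N \<Longrightarrow> pdx (pdx (\<phi> i)) x t = - (\<Sum>j<N. A i j * \<phi> j x t)"
    and eq_t: "\<And>i x t. i < N \<Longrightarrow> pdt (\<phi> i) x t = - 4 * pdx (pdx (pdx (\<phi> i))) x t"
  shows "\<forall>x t.
      hirota 2 0 (wron_f N \<phi>) (wron_g N \<phi>) x t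
        = (- A (N - 1) (N - 1)) * wron_f N \<phi> x t * wron_g N \<phi> x t
    \<and> hirota 3 0 (wron_f N \<phi>) (wron_g N \<phi>) x t + hirota 0 1 (wron_f N \<phi>) (wron_g N \<phi>) x t
        + 3 * (- A (N - 1) (N - 1)) * hirota 1 0 (wron_f N \<phi>) (wron_g N \<phi>) x t = 0"
proof -
  interpret wronskian_system N A \<phi>
    using assms by unfold_locales
  obtain q where "N = q + 2"
    using N2 by (metis le_add_diff_inverse2)
  then show ?thesis
    using bilinear_xx bilinear_xxx_t by simp
qed

end
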